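(* Let $V$ be a real $(n+1)$-dimensional vector space, $\mathcal{T}\subset V\setminus\{0\}$ a convex conic domain, and $F:\mathcal{T}\to(0,\infty)$ a smooth, positively $1$-homogeneous function such that for every $v\in\mathcal{T}$ the fundamental tensor $g_v$ has exactly one positive eigenvalue. Then for all $v,w\in\mathcal{T}$, $$F(v)+F(w)\le 2\int_0^1 F(tv+(1-t)w)\,dt\le F(v+w).$$
   Context: A conic domain of $V$ is an open connected subset $\mathcal{Q}\subset V\setminus\{0\}$ such that $\lambda v\in\mathcal{Q}$ for all $v\in\mathcal{Q}$, $\lambda>0$. Positively 1-homogeneous: $F(\lambda v)=\lambda F(v)$ for all $\lambda>0$. The fundamental tensor at $v$ is $g_v(u,w)=\frac12\frac{\partial^2}{\partial t\,\partial s}F^2(v+tu+sw)\big|_{t=s=0}$. *)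

theory Defs
  imports "HOL-Analysis.Analysis"
begin

definition conic_domain :: "'a::real_normed_vector set \<Rightarrow> bool" where
  "conic_domain Q \<longleftrightarrow> open Q \<and> connected Q \<and> Q \<noteq> {} \<and> 0 \<notin> Q \<and>
     (\<forall>v\<in>Q. \<forall>c::real. c > 0 \<longrightarrow> c *\<^sub>R v \<in> Q)"

definition dir_deriv :: "('a::real_normed_vector \<Rightarrow> real) \<Rightarrow> 'a \<Rightarrow> 'a \<Rightarrow> real" where
  "dir_deriv f u x = deriv (\<lambda>t. f (x + t *\<^sub>R u)) 0"

fun iter_dir_deriv :: "'a::real_normed_vector list \<Rightarrow> ('a \<Rightarrow> real) \<Rightarrow> 'a \<Rightarrow> real" where
  "iter_dir_deriv [] f = f"
| "iter_dir_deriv (u # us) f = dir_deriv (iter_dir_deriv us f) u"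

text \<open>Smooth (C-infinity) on an open set: all iterated directional derivatives of all
  orders exist and are continuous on S (equivalent to C-infinity in finite dimension).\<close>
definition smooth_on :: "'a::real_normed_vector set \<Rightarrow> ('a \<Rightarrow> real) \<Rightarrow> bool" where
  "smooth_on S f \<longleftrightarrow>
     (\<forall>us. continuous_on S (iter_dir_deriv us f) \<and>
        (\<forall>u. \<forall>x\<in>S. ((\<lambda>t. iter_dir_deriv us f (x + t *\<^sub>R u))
                         has_real_derivative iter_dir_deriv (u # us) f x) (at 0)))"

definition pos_homogeneous :: "'a::real_vector set \<Rightarrow> ('a \<Rightarrow> real) \<Rightarrow> bool" where
  "pos_homogeneous Q F \<longleftrightarrow> (\<forall>v\<in>Q. \<forall>c::real. c > 0 \<longrightarrow> F (c *\<^sub>R v) = c * F v)"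

definition fundamental_tensor ::
  "('a::real_normed_vector \<Rightarrow> real) \<Rightarrow> 'a \<Rightarrow> 'a \<Rightarrow> 'a \<Rightarrow> real" where
  "fundamental_tensor F v u w =
     (1/2) * deriv (\<lambda>t. deriv (\<lambda>s. (F (v + t *\<^sub>R u + s *\<^sub>R w))\<^sup>2) 0) 0"

text \<open>A bilinear form B on a Euclidean space has exactly one positive eigenvalue (counted with
  multiplicity): B is represented by a linear operator A w.r.t. the inner product, and the
  span of the eigenvectors of A with positive eigenvalues is one-dimensional.\<close>
definition one_pos_eigenvalue :: "('a::euclidean_space \<Rightarrow> 'a \<Rightarrow> real) \<Rightarrow> bool" where
  "one_pos_eigenvalue B \<longleftrightarrow>
     (\<exists>A. linear A \<and> (\<forall>u w. B u w = inner (A u) w) \<and>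
          dim (span {x. \<exists>c>0. A x = c *\<^sub>R x}) = 1)"

end

theory Submission
  imports Defs
begin

text \<open>By Euler's relation and the 0-homogeneity of \<open>dF\<close>, the fundamental tensor is
  \<open>g\<^sub>x = dF\<^sub>x \<otimes> dF\<^sub>x + F(x) d\<^sup>2F\<^sub>x\<close> with \<open>g\<^sub>x(x,\<cdot>) = F(x) dF\<^sub>x\<close>, so \<open>g\<^sub>x(x,x) = F(x)\<^sup>2 > 0\<close>.
  A symmetric form with exactly one positive eigenvalue is negative semidefinite on the
  \<open>g\<^sub>x\<close>-orthogonal complement of such an \<open>x\<close>; splitting \<open>u = u' + a x\<close> along it gives
  \<open>g\<^sub>x(u,u) \<le> dF\<^sub>x(u)\<^sup>2\<close>, i.e. \<open>d\<^sup>2F\<^sub>x(u,u) \<le> 0\<close>. Hence \<open>F\<close> is concave on \<open>T\<close>, and the two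
  inequalities are the Hermite--Hadamard inequalities for \<open>t \<mapsto> F(t v + (1 - t) w)\<close>,
  combined with \<open>F(v + w) = 2 F((v + w)/2)\<close>.\<close>

lemma linear_term_zero_if_quadratic_nonpos:
  fixes c d :: real
  assumes "\<And>t. 2 * t * c + t\<^sup>2 * d \<le> 0"
  shows "c = 0"
proof -
  define k where "k = \<bar>d\<bar> + 1"
  have k: "k > 0" "2 * k + d > 0" by (auto simp: k_def)
  have "c\<^sup>2 * (2 * k + d) = (2 * (c / k) * c + (c / k)\<^sup>2 * d) * k\<^sup>2"
    using k by (simp add: field_simps power2_eq_square)
  also have "\<dots> \<le> 0" using assms[of "c / k"] by (simp add: mult_nonpos_nonneg)
  finally have "c\<^sup>2 \<le> 0" using k by (simp add: mult_le_0_iff)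
  then show ?thesis by simp
qed

lemma inner_linear_scaleR_quadratic:
  assumes "linear A"
  shows "inner (A (c *\<^sub>R x)) (c *\<^sub>R x) = c\<^sup>2 * inner (A x) x"
  using assms by (simp add: linear_scale power2_eq_square)

lemma rayleigh_maximum_orthogonal_exists:
  fixes A :: "'a::euclidean_space \<Rightarrow> 'a"
  assumes "linear A" and "z0 \<noteq> 0" and "inner z0 e = 0"
  shows "\<exists>y. norm y = 1 \<and> inner y e = 0 \<and>
           (\<forall>z. inner z e = 0 \<longrightarrow> inner (A z) z \<le> inner (A y) y * (norm z)\<^sup>2)"
proof -
  let ?M = "{y. norm y = 1 \<and> inner y e = 0}"
  have "compact ?M"
    by (auto simp: compact_eq_bounded_closed intro!: boundedI[of _ 1] closed_Collect_conj
        closed_Collect_eq continuous_intros)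
  moreover have "z0 /\<^sub>R norm z0 \<in> ?M" using assms by simp
  moreover have "continuous_on ?M (\<lambda>y. inner (A y) y)"
    using assms(1) by (intro continuous_intros linear_continuous_on linear_conv_bounded_linear[THEN iffD1])
  ultimately obtain y where y: "y \<in> ?M" and max: "\<forall>z\<in>?M. inner (A z) z \<le> inner (A y) y"
    using continuous_attains_sup[of ?M] by blast
  have "inner (A z) z \<le> inner (A y) y * (norm z)\<^sup>2" if "inner z e = 0" for z
  proof (cases "z = 0")
    case False
    then have "inverse (norm z) *\<^sub>R z \<in> ?M" using that by simp
    then have "(inverse (norm z))\<^sup>2 * inner (A z) z \<le> inner (A y) y"
      using max inner_linear_scaleR_quadratic[OF assms(1)] by metis
    then show ?thesis
      using False by (simp add: power_inverse field_simps)
  qed (use assms(1) in \<open>simp add: linear_0\<close>)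
  with y show ?thesis by blast
qed

lemma rayleigh_maximum_orthogonal_is_eigenvector:
  fixes A :: "'a::euclidean_space \<Rightarrow> 'a"
  assumes lin: "linear A" and sym: "\<And>u w. inner (A u) w = inner (A w) u"
    and e: "A e = \<mu> *\<^sub>R e" and y: "norm y = 1" "inner y e = 0"
    and max: "\<forall>z. inner z e = 0 \<longrightarrow> inner (A z) z \<le> inner (A y) y * (norm z)\<^sup>2"
  shows "A y = inner (A y) y *\<^sub>R y"
proof -
  define l where "l = inner (A y) y"
  have yy: "inner y y = 1" using y(1) by (simp add: power2_norm_eq_inner[symmetric])
  have Ay_orth: "inner (A y) z = 0" if z: "inner z e = 0" "inner z y = 0" for z
  proof (rule linear_term_zero_if_quadratic_nonpos)
    fix t :: real
    have "inner (y + t *\<^sub>R z) e = 0" using y z by (simp add: inner_add_left)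
    then have "inner (A (y + t *\<^sub>R z)) (y + t *\<^sub>R z) \<le> l * (norm (y + t *\<^sub>R z))\<^sup>2"
      using max l_def by blast
    moreover have "(norm (y + t *\<^sub>R z))\<^sup>2 = 1 + t\<^sup>2 * (norm z)\<^sup>2"
      using yy z unfolding power2_norm_eq_inner
      by (simp add: inner_add_left inner_add_right inner_commute power2_eq_square)
    moreover have "inner (A (y + t *\<^sub>R z)) (y + t *\<^sub>R z) = l + 2 * t * inner (A y) z + t\<^sup>2 * inner (A z) z"
      using sym[of y z] lin
      by (simp add: linear_add linear_scale inner_add_left inner_add_right l_def power2_eq_square algebra_simps)
    ultimately show "2 * t * inner (A y) z + t\<^sup>2 * (inner (A z) z - l * (norm z)\<^sup>2) \<le> 0"
      by (simp add: algebra_simps)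
  qed
  define r where "r = A y - l *\<^sub>R y"
  have ry: "inner r y = 0"
    using y by (simp add: r_def inner_diff_left l_def power2_norm_eq_inner[symmetric])
  have re: "inner r e = 0"
    using y sym[of y e] e by (simp add: r_def inner_diff_left inner_diff_right inner_commute)
  have "inner r r = 0"
    using Ay_orth[OF re ry] ry by (simp add: r_def inner_diff_left inner_diff_right inner_commute)
  then show ?thesis by (simp add: r_def l_def)
qed

text \<open>Otherwise the form is positive definite on \<open>span {x, y}\<close>, and two successive maxima of
  the Rayleigh quotient yield two orthonormal eigenvectors with positive eigenvalues.\<close>

lemma nonpos_on_orthogonal_if_one_pos_eigendirection:
  fixes A :: "'a::euclidean_space \<Rightarrow> 'a"
  assumes lin: "linear A" and sym: "\<And>u w. inner (A u) w = inner (A w) u"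
    and dim_pos: "dim (span {x. \<exists>c>0. A x = c *\<^sub>R x}) = 1"
    and x: "inner (A x) x > 0" and orth: "inner (A x) y = 0"
  shows "inner (A y) y \<le> 0"
proof (rule ccontr)
  assume "\<not> ?thesis"
  then have y: "inner (A y) y > 0" by simp
  have nonzero: "z \<noteq> 0" if "inner (A z) z > 0" for z
    using that lin by (auto simp: linear_0)
  have A0: "A 0 = 0 *\<^sub>R 0" using lin by (simp add: linear_0)
  \<comment> \<open>Orthogonality to \<open>0\<close> is no constraint, so \<open>e1\<close> is a global maximizer.\<close>
  obtain e1 where e1: "norm e1 = 1"
    and max1: "\<forall>z. inner (A z) z \<le> inner (A e1) e1 * (norm z)\<^sup>2"
    using rayleigh_maximum_orthogonal_exists[OF lin nonzero[OF x], of 0] by auto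
  have eig1: "A e1 = inner (A e1) e1 *\<^sub>R e1"
    using rayleigh_maximum_orthogonal_is_eigenvector[OF lin sym A0] e1 max1 by simp
  have pos1: "inner (A e1) e1 > 0"
    using max1 x by (smt (verit) zero_le_power2 mult_nonpos_nonneg)
  obtain y0 where y0: "inner y0 e1 = 0" "inner (A y0) y0 > 0"
  proof (cases "inner x e1 = 0")
    case True
    with that x show ?thesis by blast
  next
    case False
    let ?y0 = "inner y e1 *\<^sub>R x - inner x e1 *\<^sub>R y"
    have "inner (A ?y0) ?y0 = (inner y e1)\<^sup>2 * inner (A x) x + (inner x e1)\<^sup>2 * inner (A y) y"
      using orth sym[of x y] lin
      by (simp add: linear_diff linear_scale inner_diff_left inner_diff_right power2_eq_square algebra_simps)
    also have "\<dots> > 0" using x y False by (simp add: add_nonneg_pos)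
    finally show ?thesis using that[of ?y0] by (simp add: inner_diff_left)
  qed
  obtain e2 where e2: "norm e2 = 1" "inner e2 e1 = 0"
    and max2: "\<forall>z. inner z e1 = 0 \<longrightarrow> inner (A z) z \<le> inner (A e2) e2 * (norm z)\<^sup>2"
    using rayleigh_maximum_orthogonal_exists[OF lin nonzero[OF y0(2)] y0(1)] by auto
  have eig2: "A e2 = inner (A e2) e2 *\<^sub>R e2"
    using rayleigh_maximum_orthogonal_is_eigenvector[OF lin sym eig1 e2 max2] .
  have pos2: "inner (A e2) e2 > 0"
    using max2 y0 by (smt (verit) zero_le_power2 mult_nonpos_nonneg)
  have "{e1, e2} \<subseteq> span {x. \<exists>c>0. A x = c *\<^sub>R x}"
    using eig1 eig2 pos1 pos2 by (auto intro!: span_base)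
  moreover have "independent {e1, e2}"
    using e1 e2 by (intro pairwise_orthogonal_independent)
      (auto simp: pairwise_def orthogonal_def inner_commute)
  moreover have "e1 \<noteq> e2" using e1 e2 by auto
  ultimately show False
    using independent_card_le_dim[of "{e1, e2}" "span {x. \<exists>c>0. A x = c *\<^sub>R x}"] dim_pos
    by simp
qed

lemma smooth_on_has_real_derivative_line:
  assumes sm: "smooth_on T F" and p: "y + s *\<^sub>R u \<in> T"
  shows "((\<lambda>r. iter_dir_deriv us F (y + r *\<^sub>R u)) has_real_derivative
            iter_dir_deriv (u # us) F (y + s *\<^sub>R u)) (at s)"
proof -
  let ?p = "y + s *\<^sub>R u"
  have "((\<lambda>t. iter_dir_deriv us F (?p + t *\<^sub>R u)) has_real_derivative
          iter_dir_deriv (u # us) F ?p) (at (s + - s))"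
    using sm p unfolding smooth_on_def by simp
  then have "((\<lambda>r. iter_dir_deriv us F (?p + (r + - s) *\<^sub>R u)) has_real_derivative
          iter_dir_deriv (u # us) F ?p) (at s)"
    by (rule DERIV_shift[THEN iffD1])
  moreover have "(\<lambda>r. iter_dir_deriv us F (?p + (r + - s) *\<^sub>R u)) =
      (\<lambda>r. iter_dir_deriv us F (y + r *\<^sub>R u))"
    by (simp add: algebra_simps)
  ultimately show ?thesis by simp
qed

lemma smooth_on_has_real_derivative_at_point:
  assumes "smooth_on T F" and "x \<in> T"
  shows "((\<lambda>t. iter_dir_deriv us F (x + t *\<^sub>R u)) has_real_derivative
            iter_dir_deriv (u # us) F x) (at 0)"
  using smooth_on_has_real_derivative_line[of T F x 0 u us] assms by simp

lemma smooth_on_has_real_derivative_dir_deriv: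
  assumes "smooth_on T F" and "x \<in> T"
  shows "((\<lambda>t. F (x + t *\<^sub>R u)) has_real_derivative iter_dir_deriv [u] F x) (at 0)"
  using smooth_on_has_real_derivative_at_point[OF assms, of "[]"] by simp

lemma euler_pos_homogeneous:
  assumes sm: "smooth_on T F" and ph: "pos_homogeneous T F" and x: "x \<in> T"
  shows "iter_dir_deriv [x] F x = F x"
proof -
  have "((\<lambda>t. (1 + t) * F x) has_real_derivative F x) (at 0)"
    by (rule derivative_eq_intros | simp)+
  then have "((\<lambda>t. F (x + t *\<^sub>R x)) has_real_derivative F x) (at 0)"
  proof (rule has_field_derivative_transform_within_open[where S = "{-1<..}"])
    fix t :: real
    assume "t \<in> {-1<..}"
    moreover have "x + t *\<^sub>R x = (1 + t) *\<^sub>R x" by (simp add: algebra_simps)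
    ultimately show "(1 + t) * F x = F (x + t *\<^sub>R x)"
      using ph x by (simp add: pos_homogeneous_def)
  qed auto
  then show ?thesis
    using DERIV_unique smooth_on_has_real_derivative_dir_deriv[OF sm x] by blast
qed

lemma dir_deriv_pos_homogeneous_scaleR:
  assumes sm: "smooth_on T F" and ph: "pos_homogeneous T F" and cd: "conic_domain T"
    and x: "x \<in> T" and c: "c > 0"
  shows "iter_dir_deriv [w] F (c *\<^sub>R x) = iter_dir_deriv [w] F x"
proof -
  have cx: "c *\<^sub>R x \<in> T" and oT: "open T" using cd x c by (auto simp: conic_domain_def)
  have "((\<lambda>r. F (x + r *\<^sub>R w)) has_real_derivative iter_dir_deriv [w] F x) (at (0 / c))"
    using smooth_on_has_real_derivative_dir_deriv[OF sm x] by simp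
  moreover have "((\<lambda>s. s / c) has_real_derivative 1 / c) (at 0)"
    using c by (auto intro!: derivative_eq_intros)
  ultimately have "((\<lambda>s. F (x + (s / c) *\<^sub>R w)) has_real_derivative iter_dir_deriv [w] F x * (1 / c)) (at 0)"
    by (rule DERIV_chain2)
  then have "((\<lambda>s. c * F (x + (s / c) *\<^sub>R w)) has_real_derivative iter_dir_deriv [w] F x) (at 0)"
    using c DERIV_cmult[where c = c] by fastforce
  then have "((\<lambda>s. F (c *\<^sub>R x + s *\<^sub>R w)) has_real_derivative iter_dir_deriv [w] F x) (at 0)"
  proof (rule has_field_derivative_transform_within_open[where S = "(\<lambda>s. x + (s / c) *\<^sub>R w) -` T"])
    show "open ((\<lambda>s. x + (s / c) *\<^sub>R w) -` T)"
      using oT c by (intro open_vimage continuous_intros) auto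
    fix s
    assume "s \<in> (\<lambda>s. x + (s / c) *\<^sub>R w) -` T"
    moreover have "c *\<^sub>R x + s *\<^sub>R w = c *\<^sub>R (x + (s / c) *\<^sub>R w)"
      using c by (simp add: algebra_simps)
    ultimately show "c * F (x + (s / c) *\<^sub>R w) = F (c *\<^sub>R x + s *\<^sub>R w)"
      using ph c by (simp add: pos_homogeneous_def)
  qed (use x in simp)
  then show ?thesis
    using DERIV_unique smooth_on_has_real_derivative_dir_deriv[OF sm cx] by blast
qed

lemma iter_dir_deriv_radial_eq_0:
  assumes sm: "smooth_on T F" and ph: "pos_homogeneous T F" and cd: "conic_domain T"
    and x: "x \<in> T"
  shows "iter_dir_deriv [x, w] F x = 0"
proof -
  have "((\<lambda>t. iter_dir_deriv [w] F x) has_real_derivative 0) (at 0)" by simp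
  then have "((\<lambda>t. iter_dir_deriv [w] F (x + t *\<^sub>R x)) has_real_derivative 0) (at 0)"
  proof (rule has_field_derivative_transform_within_open[where S = "{-1<..}"])
    fix t :: real
    assume "t \<in> {-1<..}"
    moreover have "x + t *\<^sub>R x = (1 + t) *\<^sub>R x" by (simp add: algebra_simps)
    ultimately show "iter_dir_deriv [w] F x = iter_dir_deriv [w] F (x + t *\<^sub>R x)"
      using dir_deriv_pos_homogeneous_scaleR[OF sm ph cd x] by simp
  qed auto
  then show ?thesis
    using DERIV_unique smooth_on_has_real_derivative_at_point[OF sm x, of "[w]" x] by blast
qed

lemma fundamental_tensor_eq:
  assumes sm: "smooth_on T F" and oT: "open T" and x: "x \<in> T"
  shows "fundamental_tensor F x u w =
     iter_dir_deriv [u] F x * iter_dir_deriv [w] F x + F x * iter_dir_deriv [u, w] F x"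
proof -
  let ?S = "(\<lambda>t. x + t *\<^sub>R u) -` T"
  have inner_deriv: "deriv (\<lambda>s. (F (x + t *\<^sub>R u + s *\<^sub>R w))\<^sup>2) 0 =
      2 * F (x + t *\<^sub>R u) * iter_dir_deriv [w] F (x + t *\<^sub>R u)" if "t \<in> ?S" for t
    using that smooth_on_has_real_derivative_dir_deriv[OF sm, of "x + t *\<^sub>R u" w]
    by (intro DERIV_imp_deriv) (auto intro!: derivative_eq_intros)
  have "((\<lambda>t. 2 * F (x + t *\<^sub>R u) * iter_dir_deriv [w] F (x + t *\<^sub>R u)) has_real_derivative
     2 * (iter_dir_deriv [u] F x * iter_dir_deriv [w] F x + F x * iter_dir_deriv [u, w] F x)) (at 0)"
    using smooth_on_has_real_derivative_dir_deriv[OF sm x, of u]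
      smooth_on_has_real_derivative_at_point[OF sm x, of "[w]" u]
    by (auto intro!: derivative_eq_intros simp: algebra_simps)
  then have "((\<lambda>t. deriv (\<lambda>s. (F (x + t *\<^sub>R u + s *\<^sub>R w))\<^sup>2) 0) has_real_derivative
     2 * (iter_dir_deriv [u] F x * iter_dir_deriv [w] F x + F x * iter_dir_deriv [u, w] F x)) (at 0)"
    by (rule has_field_derivative_transform_within_open[where S = ?S])
      (use oT x inner_deriv in \<open>auto intro!: open_vimage continuous_intros\<close>)
  then show ?thesis unfolding fundamental_tensor_def by (simp add: DERIV_imp_deriv)
qed

lemma second_difference_mean_value:
  assumes sm: "smooth_on T F" and h: "h > 0"
    and square: "\<And>s t. s \<in> {0..h} \<Longrightarrow> t \<in> {0..h} \<Longrightarrow> x + s *\<^sub>R u + t *\<^sub>R w \<in> T"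
  obtains \<xi> \<eta> where "\<xi> \<in> {0<..<h}" "\<eta> \<in> {0<..<h}"
    "F (x + h *\<^sub>R u + h *\<^sub>R w) - F (x + h *\<^sub>R u) - F (x + h *\<^sub>R w) + F x =
       h\<^sup>2 * iter_dir_deriv [w, u] F (x + \<xi> *\<^sub>R u + \<eta> *\<^sub>R w)"
proof -
  define g where "g = (\<lambda>s. F (x + h *\<^sub>R w + s *\<^sub>R u) - F (x + s *\<^sub>R u))"
  have g_deriv: "DERIV g s :> iter_dir_deriv [u] F (x + h *\<^sub>R w + s *\<^sub>R u) - iter_dir_deriv [u] F (x + s *\<^sub>R u)"
    if "0 \<le> s" "s \<le> h" for s
  proof -
    have "x + h *\<^sub>R w + s *\<^sub>R u \<in> T" "x + s *\<^sub>R u \<in> T"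
      using square[of s h] square[of s 0] that h by (auto simp: add_ac)
    from DERIV_diff[OF smooth_on_has_real_derivative_line[OF sm this(1), of "[]"]
        smooth_on_has_real_derivative_line[OF sm this(2), of "[]"]]
    show ?thesis by (simp add: g_def)
  qed
  obtain \<xi> where \<xi>: "0 < \<xi>" "\<xi> < h"
    and g_mvt: "g h - g 0 = h * (iter_dir_deriv [u] F (x + h *\<^sub>R w + \<xi> *\<^sub>R u)
                                   - iter_dir_deriv [u] F (x + \<xi> *\<^sub>R u))"
    using MVT2[OF h g_deriv] by auto
  define k where "k t = iter_dir_deriv [u] F (x + \<xi> *\<^sub>R u + t *\<^sub>R w)" for t
  have k_deriv: "DERIV k t :> iter_dir_deriv [w, u] F (x + \<xi> *\<^sub>R u + t *\<^sub>R w)" if "0 \<le> t" "t \<le> h" for t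
    using square[of \<xi> t] that \<xi> unfolding k_def
    by (intro smooth_on_has_real_derivative_line[OF sm]) auto
  obtain \<eta> where \<eta>: "0 < \<eta>" "\<eta> < h"
    and k_mvt: "k h - k 0 = h * iter_dir_deriv [w, u] F (x + \<xi> *\<^sub>R u + \<eta> *\<^sub>R w)"
    using MVT2[OF h k_deriv] by auto
  have "F (x + h *\<^sub>R u + h *\<^sub>R w) - F (x + h *\<^sub>R u) - F (x + h *\<^sub>R w) + F x = g h - g 0"
    by (simp add: g_def add_ac)
  also have "\<dots> = h * (k h - k 0)"
    using g_mvt by (simp add: k_def add_ac)
  also have "\<dots> = h\<^sup>2 * iter_dir_deriv [w, u] F (x + \<xi> *\<^sub>R u + \<eta> *\<^sub>R w)"
    using k_mvt by (simp add: power2_eq_square)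
  finally show ?thesis using that \<xi> \<eta> by simp
qed

lemma iter_dir_deriv_commute:
  assumes sm: "smooth_on T F" and oT: "open T" and x: "x \<in> T"
  shows "iter_dir_deriv [u, w] F x = iter_dir_deriv [w, u] F x"
proof -
  let ?Duw = "iter_dir_deriv [u, w] F" and ?Dwu = "iter_dir_deriv [w, u] F"
  have close: "\<bar>?Duw x - ?Dwu x\<bar> \<le> 2 * \<epsilon>" if \<epsilon>: "\<epsilon> > 0" for \<epsilon>
  proof -
    have "continuous_on T ?Duw" "continuous_on T ?Dwu"
      using sm unfolding smooth_on_def by blast+
    then obtain d1 d2 where d: "d1 > 0" "d2 > 0"
      and cont: "\<forall>y\<in>T. dist y x < d1 \<longrightarrow> dist (?Duw y) (?Duw x) < \<epsilon>"
         "\<forall>y\<in>T. dist y x < d2 \<longrightarrow> dist (?Dwu y) (?Dwu x) < \<epsilon>"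
      using x \<epsilon> unfolding continuous_on_iff by metis
    obtain r where r: "r > 0" "ball x r \<subseteq> T"
      using oT x open_contains_ball by blast
    define \<delta> where "\<delta> = min r (min d1 d2)"
    define h where "h = \<delta> / (norm u + norm w + 1)"
    have "\<delta> > 0" and norms: "norm u + norm w + 1 > 0"
      using r d by (simp_all add: \<delta>_def add_nonneg_pos)
    then have "h > 0" by (simp add: h_def)
    moreover have "h * (norm u + norm w) < h * (norm u + norm w + 1)"
      using \<open>h > 0\<close> by simp
    moreover have "h * (norm u + norm w + 1) = \<delta>"
      using norms by (simp add: h_def)
    ultimately have h: "h > 0" "h * (norm u + norm w) < \<delta>" by simp_all
    have near: "dist (x + s *\<^sub>R u + t *\<^sub>R w) x < \<delta>"
      if "s \<in> {0..h}" "t \<in> {0..h}" for s t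
    proof -
      have "norm (s *\<^sub>R u + t *\<^sub>R w) \<le> s * norm u + t * norm w"
        using that norm_triangle_ineq[of "s *\<^sub>R u" "t *\<^sub>R w"] by simp
      also have "\<dots> \<le> h * (norm u + norm w)"
        using that by (simp add: distrib_left add_mono mult_right_mono)
      finally show ?thesis using h by (simp add: dist_norm add.assoc)
    qed
    have square: "x + s *\<^sub>R u + t *\<^sub>R w \<in> T" "x + t *\<^sub>R w + s *\<^sub>R u \<in> T"
      if "s \<in> {0..h}" "t \<in> {0..h}" for s t
      using near[OF that] r by (auto simp: \<delta>_def dist_commute add_ac)
    obtain \<xi> \<eta> where \<xi>\<eta>: "\<xi> \<in> {0<..<h}" "\<eta> \<in> {0<..<h}"
      and mvt1: "F (x + h *\<^sub>R u + h *\<^sub>R w) - F (x + h *\<^sub>R u) - F (x + h *\<^sub>R w) + F x =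
          h\<^sup>2 * ?Dwu (x + \<xi> *\<^sub>R u + \<eta> *\<^sub>R w)"
      using second_difference_mean_value[OF sm h(1) square(1)] by blast
    obtain \<xi>' \<eta>' where \<xi>\<eta>': "\<xi>' \<in> {0<..<h}" "\<eta>' \<in> {0<..<h}"
      and mvt2: "F (x + h *\<^sub>R w + h *\<^sub>R u) - F (x + h *\<^sub>R w) - F (x + h *\<^sub>R u) + F x =
          h\<^sup>2 * ?Duw (x + \<xi>' *\<^sub>R w + \<eta>' *\<^sub>R u)"
      using second_difference_mean_value[OF sm h(1) square(2)] by blast
    let ?p = "x + \<xi> *\<^sub>R u + \<eta> *\<^sub>R w" and ?q = "x + \<xi>' *\<^sub>R w + \<eta>' *\<^sub>R u"
    have swap: "x + h *\<^sub>R w + h *\<^sub>R u = x + h *\<^sub>R u + h *\<^sub>R w" by (simp add: add_ac)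
    have "h\<^sup>2 * ?Dwu ?p = h\<^sup>2 * ?Duw ?q" using mvt1 mvt2[unfolded swap] by linarith
    then have "?Dwu ?p = ?Duw ?q" using h by simp
    moreover have "?p \<in> T" "dist ?p x < \<delta>" "?q \<in> T" "dist ?q x < \<delta>"
      using near[of \<xi> \<eta>] near[of \<eta>' \<xi>'] square[of \<xi> \<eta>] square[of \<eta>' \<xi>'] \<xi>\<eta> \<xi>\<eta>'
      by (simp_all add: add_ac)
    then have "\<bar>?Dwu ?p - ?Dwu x\<bar> < \<epsilon>" "\<bar>?Duw ?q - ?Duw x\<bar> < \<epsilon>"
      using cont by (auto simp: \<delta>_def dist_real_def)
    ultimately show ?thesis by linarith
  qed
  have "\<bar>?Duw x - ?Dwu x\<bar> \<le> 0"
  proof (rule field_le_epsilon)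
    fix \<epsilon> :: real
    assume "\<epsilon> > 0"
    then show "\<bar>?Duw x - ?Dwu x\<bar> \<le> 0 + \<epsilon>" using close[of "\<epsilon> / 2"] by simp
  qed
  then show ?thesis by simp
qed

lemma second_dir_deriv_nonpos:
  assumes cd: "conic_domain T" and sm: "smooth_on T F" and ph: "pos_homogeneous T F"
    and x: "x \<in> T" and Fx: "F x > 0" and eig: "one_pos_eigenvalue (fundamental_tensor F x)"
  shows "iter_dir_deriv [u, u] F x \<le> 0"
proof -
  have oT: "open T" using cd by (simp add: conic_domain_def)
  obtain A where lin: "linear A" and gA: "\<forall>p q. fundamental_tensor F x p q = inner (A p) q"
    and dim_pos: "dim (span {x. \<exists>c>0. A x = c *\<^sub>R x}) = 1"
    using eig unfolding one_pos_eigenvalue_def by blast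
  let ?D1 = "\<lambda>p. iter_dir_deriv [p] F x" and ?D2 = "\<lambda>p q. iter_dir_deriv [p, q] F x"
  have A_eq: "inner (A p) q = ?D1 p * ?D1 q + F x * ?D2 p q" for p q
    using gA fundamental_tensor_eq[OF sm oT x] by metis
  have sym: "inner (A p) q = inner (A q) p" for p q
    using A_eq[of p q] A_eq[of q p] iter_dir_deriv_commute[OF sm oT x, of p q] by (simp add: mult_ac)
  have A_x: "inner (A x) q = F x * ?D1 q" for q
    using A_eq[of x q] euler_pos_homogeneous[OF sm ph x] iter_dir_deriv_radial_eq_0[OF sm ph cd x]
    by simp
  define a where "a = ?D1 u / F x"
  define u' where "u' = u - a *\<^sub>R x"
  have Axx: "inner (A x) x = (F x)\<^sup>2"
    using A_x[of x] euler_pos_homogeneous[OF sm ph x] by (simp add: power2_eq_square)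
  have orth: "inner (A x) u' = 0"
    using A_x[of u] Axx Fx by (simp add: u'_def inner_diff_right a_def power2_eq_square)
  have "inner (A u') u' \<le> 0"
    using nonpos_on_orthogonal_if_one_pos_eigendirection[OF lin sym dim_pos _ orth] Axx Fx by simp
  moreover have "inner (A u) u = inner (A u') u' + (?D1 u)\<^sup>2"
  proof -
    have "inner (A u) u = inner (A u') u' + 2 * a * inner (A x) u' + a\<^sup>2 * inner (A x) x"
      using lin sym[of u' x] unfolding u'_def
      by (simp add: linear_diff linear_scale inner_diff_left inner_diff_right power2_eq_square algebra_simps)
    then show ?thesis
      using orth Axx Fx by (simp add: a_def power_divide)
  qed
  moreover have "inner (A u) u = (?D1 u)\<^sup>2 + F x * ?D2 u u"
    using A_eq[of u u] by (simp add: power2_eq_square)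
  ultimately have "F x * ?D2 u u \<le> 0" by linarith
  with Fx show ?thesis by (simp add: mult_le_0_iff)
qed

lemma concave_on_if_second_dir_deriv_nonpos:
  assumes cv: "convex T" and sm: "smooth_on T F"
    and nonpos: "\<And>x u. x \<in> T \<Longrightarrow> iter_dir_deriv [u, u] F x \<le> 0"
  shows "concave_on T F"
  unfolding concave_on_def
proof (rule convex_onI[OF _ cv])
  fix t :: real and x y
  assume t: "0 < t" "t < 1" and xy: "x \<in> T" "y \<in> T"
  define g where "g = (\<lambda>s. F (x + s *\<^sub>R (y - x)))"
  have seg: "x + s *\<^sub>R (y - x) \<in> T" if "s \<in> {0..1}" for s
    using convexD_alt[OF cv xy, of s] that by (simp add: algebra_simps)
  have "concave_on {0..1} g"
  proof (rule f''_le0_imp_concave[OF convex_real_interval(5)])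
    fix s :: real
    assume "s \<in> {0..1}"
    note line_deriv = smooth_on_has_real_derivative_line[OF sm seg[OF this]]
    show "DERIV g s :> iter_dir_deriv [y - x] F (x + s *\<^sub>R (y - x))"
      using line_deriv[of "[]"] by (simp add: g_def)
    show "DERIV (\<lambda>s. iter_dir_deriv [y - x] F (x + s *\<^sub>R (y - x))) s :>
             iter_dir_deriv [y - x, y - x] F (x + s *\<^sub>R (y - x))"
      using line_deriv[of "[y - x]"] .
    show "iter_dir_deriv [y - x, y - x] F (x + s *\<^sub>R (y - x)) \<le> 0"
      using nonpos seg \<open>s \<in> {0..1}\<close> by blast
  qed
  from concave_onD[OF this, of t 0 1] t have "g t \<ge> (1 - t) * g 0 + t * g 1" by simp
  moreover have "x + t *\<^sub>R (y - x) = (1 - t) *\<^sub>R x + t *\<^sub>R y" by (simp add: algebra_simps)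
  ultimately show "- F ((1 - t) *\<^sub>R x + t *\<^sub>R y) \<le> (1 - t) * - F x + t * - F y"
    by (simp add: g_def)
qed

lemma has_integral_reflect_01:
  fixes f :: "real \<Rightarrow> 'b::real_normed_vector"
  assumes "(f has_integral I) {0..1}"
  shows "((\<lambda>t. f (1 - t)) has_integral I) {0..1}"
  using has_integral_affinity[of f I 0 1 "-1" 1] assms
  by (simp add: image_affinity_atLeastAtMost)

lemma concave_on_hermite_hadamard:
  fixes F :: "'a::real_normed_vector \<Rightarrow> real"
  assumes cc: "concave_on S F" and cont: "continuous_on S F" and v: "v \<in> S" and w: "w \<in> S"
  shows "F v + F w \<le> 2 * integral {0..1} (\<lambda>t. F (t *\<^sub>R v + (1 - t) *\<^sub>R w))"
    and "2 * integral {0..1} (\<lambda>t. F (t *\<^sub>R v + (1 - t) *\<^sub>R w)) \<le> 2 * F ((1 / 2) *\<^sub>R (v + w))"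
proof -
  define f where "f = (\<lambda>t. F (t *\<^sub>R v + (1 - t) *\<^sub>R w))"
  have seg: "t *\<^sub>R v + (1 - t) *\<^sub>R w \<in> S" if "t \<in> {0..1}" for t
    using concave_on_iff[THEN iffD1, OF cc] v w that by (auto intro!: convexD)
  have conc: "f t \<ge> (1 - t) * F w + t * F v" if "t \<in> {0..1}" for t
    using concave_onD[OF cc, of t w v] that v w by (simp add: f_def add.commute)
  have lower: "F v + F w \<le> f t + f (1 - t)" if "t \<in> {0..1}" for t
    using conc[OF that] conc[of "1 - t"] that by (simp add: algebra_simps)
  have upper: "f t + f (1 - t) \<le> 2 * F ((1 / 2) *\<^sub>R (v + w))" if "t \<in> {0..1}" for t
  proof -
    have "t *\<^sub>R v + (1 - t) *\<^sub>R w \<in> S" "(1 - t) *\<^sub>R v + (1 - (1 - t)) *\<^sub>R w \<in> S"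
      using seg[of t] seg[of "1 - t"] that by auto
    from concave_onD[OF cc, of "1 / 2", OF _ _ this]
    show ?thesis by (simp add: f_def algebra_simps)
  qed
  have "continuous_on {0..1} (\<lambda>t. t *\<^sub>R v + (1 - t) *\<^sub>R w)"
    by (intro continuous_intros)
  moreover have "(\<lambda>t. t *\<^sub>R v + (1 - t) *\<^sub>R w) ` {0..1} \<subseteq> S"
    using seg by blast
  ultimately have "continuous_on {0..1} f"
    unfolding f_def using continuous_on_compose2[OF cont] by blast
  then have "(f has_integral integral {0..1} f) {0..1}"
    using integrable_continuous_interval has_integral_integral by blast
  then have sum: "((\<lambda>t. f t + f (1 - t)) has_integral 2 * integral {0..1} f) {0..1}"
    using has_integral_add[OF _ has_integral_reflect_01] by fastforce
  show "F v + F w \<le> 2 * integral {0..1} (\<lambda>t. F (t *\<^sub>R v + (1 - t) *\<^sub>R w))"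
    using has_integral_le[OF has_integral_const_real[of "F v + F w" 0 1, simplified] sum] lower
    by (simp add: f_def)
  show "2 * integral {0..1} (\<lambda>t. F (t *\<^sub>R v + (1 - t) *\<^sub>R w)) \<le> 2 * F ((1 / 2) *\<^sub>R (v + w))"
    using has_integral_le[OF sum has_integral_const_real[of "2 * F ((1 / 2) *\<^sub>R (v + w))" 0 1,
          simplified]] upper
    by (simp add: f_def)
qed

theorem mainTheorem5:
  fixes T :: "'a::euclidean_space set" and F :: "'a \<Rightarrow> real"
  assumes "conic_domain T" and "convex T"
    and "\<forall>v\<in>T. F v > 0"
    and "smooth_on T F"
    and "pos_homogeneous T F"
    and "\<forall>v\<in>T. one_pos_eigenvalue (fundamental_tensor F v)"
    and "v \<in> T" and "w \<in> T"
  shows "F v + F w \<le> 2 * integral {0..1} (\<lambda>t. F (t *\<^sub>R v + (1 - t) *\<^sub>R w))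
       \<and> 2 * integral {0..1} (\<lambda>t. F (t *\<^sub>R v + (1 - t) *\<^sub>R w)) \<le> F (v + w)"
proof -
  note cd = assms(1) and cv = assms(2) and sm = assms(4) and ph = assms(5)
  have "concave_on T F"
    using concave_on_if_second_dir_deriv_nonpos[OF cv sm] second_dir_deriv_nonpos[OF cd sm ph] assms(3,6)
    by blast
  moreover have "continuous_on T F"
    using sm unfolding smooth_on_def by (metis iter_dir_deriv.simps(1))
  moreover have "F (v + w) = 2 * F ((1 / 2) *\<^sub>R (v + w))"
  proof -
    define m where "m = (1 / 2) *\<^sub>R (v + w)"
    have "m \<in> T"
      using convexD_alt[OF cv assms(7,8), of "1 / 2"] by (simp add: m_def algebra_simps)
    with ph have "F (2 *\<^sub>R m) = 2 * F m" unfolding pos_homogeneous_def by simp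
    moreover have "2 *\<^sub>R m = v + w" by (simp add: m_def)
    ultimately show ?thesis by (simp add: m_def)
  qed
  ultimately show ?thesis
    using concave_on_hermite_hadamard[of T F v w] assms(7,8) by linarith
qed

end
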